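(* Let $V$ be a $\mathcal{T}$-module which is free of rank $1$ as a $\mathcal{U}(\mathfrak{h})$-module, $\mathfrak{h}=\mathbb{C}L_0\oplus\mathbb{C}G_0$, with an even free generator $\mathbf{1}$, so that $V_{\bar0}=\mathbb{C}[L_0]\mathbf{1}$ and $V_{\bar1}=G_0\mathbb{C}[L_0]\mathbf{1}$. Write $f(\partial^2)\mathbf{1}:=f(L_0)\mathbf{1}$ and $\partial f(\partial^2)\mathbf{1}:=G_0f(L_0)\mathbf{1}$ for polynomials $f$ (note $G_0^2=L_0$). Let $\lambda\in\mathbb{C}^*$, $\alpha\in\mathbb{C}$ be such that $L_mf(\partial^2)\mathbf{1}=\lambda^m(\partial^2+m\alpha)f(\partial^2+m)\mathbf{1}$ for all $m\in\mathbb{Z}$ and all polynomials $f$. Then one of the following holds: (a) for all $r\in\frac12+\mathbb{Z}$ and $p\in\frac12\mathbb{Z}$: $G_p\mathbf{1}=\lambda^p\partial\mathbf{1}$, $G_r\partial\mathbf{1}=-\lambda^r(\partial^2+2r\alpha)\mathbf{1}$, $I_r\mathbf{1}=-2\lambda^r\alpha\mathbf{1}$; (b) for all $r\in\frac12+\mathbb{Z}$ and $p\in\frac12\mathbb{Z}$: $G_p\mathbf{1}=(-1)^{2p}\lambda^p\partial\mathbf{1}$, $G_r\partial\mathbf{1}=\lambda^r(\partial^2+2r\alpha)\mathbf{1}$, $I_r\mathbf{1}=2\lambda^r\alpha\mathbf{1}$.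
   Context: The twisted $N=2$ superconformal algebra $\mathcal{T}$ is the Lie superalgebra over $\mathbb{C}$ with basis $\{L_m, I_r, G_p\mid m\in\mathbb{Z}, r\in\frac12+\mathbb{Z}, p\in\frac12\mathbb{Z}\}$, even part spanned by the $L_m,I_r$, odd part by the $G_p$, only nonzero brackets $[L_m,L_n]=(m-n)L_{m+n}$, $[L_m,I_r]=-rI_{m+r}$, $[L_m,G_p]=(\frac m2-p)G_{m+p}$, $[I_r,G_p]=G_{r+p}$, $[G_p,G_q]=(-1)^{2p}2L_{p+q}$ if $p+q\in\mathbb{Z}$, $[G_p,G_q]=(-1)^{2p+1}(p-q)I_{p+q}$ if $p+q\in\frac12+\mathbb{Z}$. A $\mathcal{T}$-module is a $\mathbb{Z}_2$-graded space with $\mathcal{T}_{\bar i}V_{\bar j}\subseteq V_{\bar i+\bar j}$ and $x(yv)-(-1)^{|x||y|}y(xv)=[x,y]v$. For $p\in\frac12\mathbb{Z}$, $\lambda^p$ means $(\lambda^{1/2})^{2p}$ for a fixed square root $\lambda^{1/2}$. *)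

theory Defs
  imports Main "HOL-Computational_Algebra.Polynomial"
begin

text \<open>G k  stands for  G_{k/2}      (k :: int, so p = k/2 ranges over (1/2)Z);
  I j  stands for  I_{j+1/2}    (j :: int, so r = j + 1/2 ranges over 1/2 + Z);
  L m  stands for  L_m.\<close>

definition twisted_N2_module ::
  "(complex \<Rightarrow> 'v::ab_group_add \<Rightarrow> 'v) \<Rightarrow> 'v set \<Rightarrow> 'v set \<Rightarrow>
   (int \<Rightarrow> 'v \<Rightarrow> 'v) \<Rightarrow> (int \<Rightarrow> 'v \<Rightarrow> 'v) \<Rightarrow> (int \<Rightarrow> 'v \<Rightarrow> 'v) \<Rightarrow> bool" where
  "twisted_N2_module smul V0 V1 L I G \<longleftrightarrow>
     Vector_Spaces.vector_space smul \<and>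
     module.subspace smul V0 \<and> module.subspace smul V1 \<and>
     V0 \<inter> V1 = {0} \<and> (\<forall>v. \<exists>a\<in>V0. \<exists>b\<in>V1. v = a + b) \<and>
     (\<forall>m. Vector_Spaces.linear smul smul (L m)) \<and>
     (\<forall>j. Vector_Spaces.linear smul smul (I j)) \<and>
     (\<forall>k. Vector_Spaces.linear smul smul (G k)) \<and>
     (\<forall>m. L m ` V0 \<subseteq> V0 \<and> L m ` V1 \<subseteq> V1) \<and>
     (\<forall>j. I j ` V0 \<subseteq> V0 \<and> I j ` V1 \<subseteq> V1) \<and>
     (\<forall>k. G k ` V0 \<subseteq> V1 \<and> G k ` V1 \<subseteq> V0) \<and>
     \<comment> \<open>[L_m, L_n] = (m-n) L_{m+n}\<close>
     (\<forall>m n v. L m (L n v) - L n (L m v) = smul (of_int (m - n)) (L (m + n) v)) \<and>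
     \<comment> \<open>[L_m, I_r] = -r I_{m+r},  r = j + 1/2\<close>
     (\<forall>m j v. L m (I j v) - I j (L m v) = smul (- (of_int j + 1/2)) (I (j + m) v)) \<and>
     \<comment> \<open>[L_m, G_p] = (m/2 - p) G_{m+p},  p = k/2\<close>
     (\<forall>m k v. L m (G k v) - G k (L m v) =
        smul (of_int m / 2 - of_int k / 2) (G (k + 2 * m) v)) \<and>
     \<comment> \<open>[I_r, I_s] = 0\<close>
     (\<forall>i j v. I i (I j v) - I j (I i v) = 0) \<and>
     \<comment> \<open>[I_r, G_p] = G_{r+p}\<close>
     (\<forall>j k v. I j (G k v) - G k (I j v) = G (2 * j + 1 + k) v) \<and>
     \<comment> \<open>[G_p, G_q] = (-1)^{2p} 2 L_{p+q}  if p+q integer\<close>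
     (\<forall>k l v. even (k + l) \<longrightarrow>
        G k (G l v) + G l (G k v) = smul ((-1) ^ nat \<bar>k\<bar> * 2) (L ((k + l) div 2) v)) \<and>
     \<comment> \<open>[G_p, G_q] = (-1)^{2p+1} (p-q) I_{p+q}  if p+q in 1/2+Z\<close>
     (\<forall>k l v. odd (k + l) \<longrightarrow>
        G k (G l v) + G l (G k v) =
          smul ((-1) ^ nat \<bar>k + 1\<bar> * (of_int k / 2 - of_int l / 2)) (I ((k + l) div 2) v))"

definition polyop :: "(complex \<Rightarrow> 'v::ab_group_add \<Rightarrow> 'v) \<Rightarrow> ('v \<Rightarrow> 'v) \<Rightarrow> complex poly \<Rightarrow> 'v \<Rightarrow> 'v" where
  "polyop smul A f v = (\<Sum>i\<le>degree f. smul (coeff f i) ((A ^^ i) v))"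

end

theory Submission
  imports Defs
begin

(*
  Freeness identifies both V_0 and V_1 with C[x], via f \<mapsto> f(L_0) 1 and g \<mapsto> G_0 g(L_0) 1.
  Since L_0 G_k = G_k (L_0 - k/2) and L_0 I_j = I_j (L_0 - j - 1/2), the operators G_k and I_j act
  in these coordinates by a shift of the argument followed by multiplication with the polynomial
  g_k resp. h_j that describes G_k 1 resp. I_j 1, so every super-bracket applied to 1 becomes a
  polynomial identity. G_{2n}^2 = L_{2n} forces g_{2n} = \<lambda>^n. For odd k = 2j + 1, the relations
  G_k^2 = - L_k and [L_2, G_k] = (1 - k/2) G_{k+4} force g_k to be a constant e_k with
  e_k^2 = \<lambda>^k and h_j = - 2 \<alpha> e_k, and [I_j, G_{2n}] = G_{k+2n} gives e_k = \<lambda>^j e_1.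
  The two alternatives are the two square roots e_1 = \<plusminus>\<lambda>^(1/2).
*)

lemma neg_one_power_nat_abs: "(-1::'a::ring_1) ^ nat \<bar>k\<bar> = (if even k then 1 else -1)"
  by (simp add: even_nat_iff)

lemma power_int_eq_square_power_int_div_2:
  fixes mu :: "'a::field"
  assumes "mu \<noteq> 0"
  shows "mu powi k = (mu ^ 2) powi (k div 2) * (if even k then 1 else mu)"
proof -
  have sq: "(mu ^ 2) powi (k div 2) = mu powi (2 * (k div 2))"
    by (metis power_int_mult power_int_numeral)
  show ?thesis
  proof (cases "even k")
    case True
    then show ?thesis by (simp add: sq)
  next
    case False
    then have "k = 2 * (k div 2) + 1" by presburger
    then have "mu powi k = mu powi (2 * (k div 2)) * mu"
      using assms by (metis power_int_add_1)
    then show ?thesis using False by (simp add: sq)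
  qed
qed

lemma poly_eq_linear_of_degree_le_1:
  "degree (p::'a::zero poly) \<le> 1 \<Longrightarrow> p = [:coeff p 0, coeff p 1:]"
  by (rule poly_eqI) (auto simp: coeff_pCons coeff_eq_0 split: nat.split)

lemma poly_eq_quadratic_of_degree_le_2:
  "degree (p::'a::zero poly) \<le> 2 \<Longrightarrow> p = [:coeff p 0, coeff p 1, coeff p 2:]"
  by (rule poly_eqI)
    (auto simp: coeff_pCons coeff_eq_0 split: nat.split simp flip: numeral_2_eq_2)

lemma degree_add_degree_of_mult_eq:
  fixes p q :: "'a::idom poly"
  assumes "p * q = r" and "r \<noteq> 0"
  shows "degree p + degree q = degree r"
  using assms degree_mult_eq[of p q] by fastforce

text \<open>This is the identity G_{2n}^2 1 = L_{2n} 1 in coordinates, with c = \<lambda>^n.\<close>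

lemma const_of_even_square_identity:
  fixes g :: "complex poly" and a b c d :: complex
  assumes c: "c \<noteq> 0"
    and eq: "pcompose g [:a, 1:] * (smult (2 * c) [:b, 1:] - [:0, 1:] * g) = smult (c ^ 2) [:d, 1:]"
  shows "g = [:c:]"
proof -
  have "degree (pcompose g [:a, 1:]) + degree (smult (2 * c) [:b, 1:] - [:0, 1:] * g) = 1"
    using degree_add_degree_of_mult_eq[OF eq] c by simp
  then have "degree g \<le> 1" by (simp add: degree_pcompose)
  then obtain g0 g1 where g: "g = [:g0, g1:]" using poly_eq_linear_of_degree_le_1 by blast
  have h: "g1 = 0 \<and> c * (g0 * 2) = g0 * g0 + c ^ 2"
    using eq[unfolded g] by (auto simp: pcompose_pCons algebra_simps)
  have "(g0 - c) ^ 2 = g0 * g0 + c ^ 2 - c * (g0 * 2)" by (simp add: power2_eq_square algebra_simps)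
  then have "(g0 - c) ^ 2 = 0" using h by simp
  then show ?thesis using h g by simp
qed

lemma degree_le_of_odd_square_identity:
  fixes g h :: "complex poly" and c La al :: complex
  assumes "c \<noteq> 0" and "La \<noteq> 0"
    and sq: "pcompose g [:c, 1:] * (smult c h - [:0, 1:] * g) = - smult La [:2 * c * al, 1:]"
  shows "degree g \<le> 1" and "degree h \<le> 2"
proof -
  define Q where "Q = smult c h - [:0, 1:] * g"
  have "degree (pcompose g [:c, 1:]) + degree Q = 1"
    using degree_add_degree_of_mult_eq[OF sq[folded Q_def]] \<open>La \<noteq> 0\<close> by simp
  then have dg: "degree g \<le> 1" and dQ: "degree Q \<le> 1" by (simp_all add: degree_pcompose)
  then show "degree g \<le> 1" by simp
  have "smult c h = Q + [:0, 1:] * g" unfolding Q_def by simp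
  moreover have "degree (Q + [:0, 1:] * g) \<le> 2"
    by (rule order.trans[OF degree_add_le]) (use dQ dg degree_mult_le[of "[:0, 1:]" g] in auto)
  ultimately show "degree h \<le> 2" using \<open>c \<noteq> 0\<close> by (metis degree_smult_eq)
qed

text \<open>These are the identities G_k^2 1 = - L_k 1 and [L_2, G_k] 1 = (1 - k/2) G_{k+4} 1 in
  coordinates, for odd k, with c = k/2 and La = \<lambda>^k.\<close>

lemma const_of_odd_identities:
  fixes g h :: "complex poly" and c La al :: complex
  assumes c0: "c \<noteq> 0" and c1: "c \<noteq> 1" and c2: "c \<noteq> 2" and La: "La \<noteq> 0"
    and sq: "pcompose g [:c, 1:] * (smult c h - [:0, 1:] * g) = - smult La [:2 * c * al, 1:]"
    and comm: "[:2 * al, 1:] * pcompose g [:2, 1:] + pcompose g [:2, 1:] - pcompose [:2 * al, 1:] [:c, 1:] * g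
       = smult (1 - c) (h + g - pcompose h [:2, 1:])"
  obtains e where "g = [:e:]" and "e ^ 2 = La" and "h = [:- 2 * al * e:]"
proof -
  note dg = degree_le_of_odd_square_identity(1)[OF c0 La sq]
    and dh = degree_le_of_odd_square_identity(2)[OF c0 La sq]
  obtain g0 g1 where g: "g = [:g0, g1:]" using poly_eq_linear_of_degree_le_1[OF dg] by blast
  obtain h0 h1 h2 where h: "h = [:h0, h1, h2:]" using poly_eq_quadratic_of_degree_le_2[OF dh] by blast
  have e: "c * (g0 * h0) + c * (c * (g1 * h0)) = - (La * (al * (c * 2))) \<and>
      La + (c * (g0 * h1) + (c * (g1 * h0) + c * (c * (g1 * h1)))) = g0 * g0 + c * (g0 * g1) \<and>
      (g1 = 0 \<or> c * h2 = g1)"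
    using sq[unfolded g h] by (simp add: pcompose_pCons algebra_simps)
  have b: "g1 * 2 + (h1 * 2 + (h2 * 4 + al * (g1 * 4))) = c * (h1 * 2) + c * (h2 * 4) \<and>
      g1 * 2 + h2 * 4 = c * (h2 * 4)"
    using comm[unfolded g h] by (simp add: pcompose_pCons algebra_simps)
  have g1: "g1 = 0"
  proof (rule ccontr)
    assume "g1 \<noteq> 0"
    then have gh: "c * h2 = g1" using e by auto
    have "h2 * (4 - 2 * c) = (g1 * 2 + h2 * 4) - c * (h2 * 4) - (g1 - c * h2) * 2"
      by (simp add: algebra_simps)
    also have "\<dots> = 0" using b gh by simp
    finally have "h2 = 0" using c2 by simp
    then show False using gh \<open>g1 \<noteq> 0\<close> by simp
  qed
  have h2: "h2 = 0"
  proof -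
    have "h2 * (4 - 4 * c) = (g1 * 2 + h2 * 4) - c * (h2 * 4)" using g1 by (simp add: algebra_simps)
    also have "\<dots> = 0" using b by simp
    finally show ?thesis using c1 by simp
  qed
  have h1: "h1 = 0"
  proof -
    have "h1 * (2 - 2 * c) = (g1 * 2 + (h1 * 2 + (h2 * 4 + al * (g1 * 4)))) - (c * (h1 * 2) + c * (h2 * 4))"
      using g1 h2 by (simp add: algebra_simps)
    also have "\<dots> = 0" using b by simp
    finally show ?thesis using c1 by simp
  qed
  have g0: "g0 * g0 = La" using e g1 h1 h2 by simp
  then have "g0 \<noteq> 0" using La by auto
  moreover have "c * g0 * (h0 + 2 * al * g0) = (c * (g0 * h0) + c * (c * (g1 * h0))) + La * (al * (c * 2))"
    using g1 g0 by (simp add: algebra_simps)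
  ultimately have "h0 = - 2 * al * g0" using e c0 by (simp add: eq_neg_iff_add_eq_0)
  then show ?thesis using that[of g0] g h g1 h1 h2 g0 by (simp add: power2_eq_square)
qed

locale complex_vector_space = vector_space smul
  for smul :: "complex \<Rightarrow> 'v::ab_group_add \<Rightarrow> 'v" (infixr "*s" 75)
begin

sublocale vector_space_pair smul smul ..

lemma add_self_eq_scale_two_iff: "w + w = (2::complex) *s u \<longleftrightarrow> w = u"
proof -
  have "w + w = (2::complex) *s w" using scale_left_distrib[of 1 1 w] by simp
  then show ?thesis by simp
qed

lemma polyop_0 [simp]: "polyop smul A 0 v = 0"
  by (simp add: polyop_def)

lemma polyop_eq_sum:
  assumes "degree p \<le> N"
  shows "polyop smul A p v = (\<Sum>i\<le>N. coeff p i *s (A ^^ i) v)"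
  unfolding polyop_def using assms by (intro sum.mono_neutral_left) (auto simp: coeff_eq_0)

context
  fixes A assumes lin: "Vector_Spaces.linear smul smul A"
begin

lemma polyop_pCons: "polyop smul A (pCons a p) v = a *s v + A (polyop smul A p v)"
proof -
  have "polyop smul A (pCons a p) v = (\<Sum>i\<le>Suc (degree p). coeff (pCons a p) i *s (A ^^ i) v)"
    by (rule polyop_eq_sum) (simp add: degree_pCons_le)
  also have "\<dots> = a *s v + (\<Sum>i\<le>degree p. coeff p i *s (A ^^ Suc i) v)"
    by (subst sum.atMost_Suc_shift) simp
  also have "(\<Sum>i\<le>degree p. coeff p i *s (A ^^ Suc i) v) = A (polyop smul A p v)"
    by (simp add: polyop_def linear_sum[OF lin] linear_scale[OF lin])
  finally show ?thesis .
qed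

lemma polyop_linear_poly: "polyop smul A [:a, b:] v = a *s v + b *s A v"
  by (simp add: polyop_pCons linear_0[OF lin] linear_scale[OF lin])

lemma polyop_add: "polyop smul A (p + q) v = polyop smul A p v + polyop smul A q v"
proof (induct p arbitrary: q)
  case 0 then show ?case by simp
next
  case (pCons a p)
  obtain b q' where q: "q = pCons b q'" by (cases q)
  show ?case using pCons(2)[of q']
    by (simp add: q polyop_pCons linear_add[OF lin] scale_left_distrib algebra_simps)
qed

lemma polyop_smult: "polyop smul A (smult c p) v = c *s polyop smul A p v"
  by (induct p) (simp_all add: polyop_pCons linear_add[OF lin] linear_scale[OF lin] scale_right_distrib)

lemma polyop_minus: "polyop smul A (- p) v = - polyop smul A p v"
  using polyop_smult[of "-1" p v] by simp

lemma polyop_diff: "polyop smul A (p - q) v = polyop smul A p v - polyop smul A q v"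
  using polyop_add[of p "- q" v] polyop_minus[of q v] by simp

lemma polyop_mult: "polyop smul A (p * q) v = polyop smul A p (polyop smul A q v)"
  by (induct p) (simp_all add: polyop_pCons polyop_add polyop_smult)

lemma linear_polyop_shift:
  assumes linX: "Vector_Spaces.linear smul smul X"
    and comm: "\<And>v. X (A v) = A (X v) + c *s X v"
  shows "X (polyop smul A p v) = polyop smul A (pcompose p [:c, 1:]) (X v)"
proof (induct p)
  case 0 then show ?case by (simp add: linear_0[OF linX])
next
  case (pCons a p)
  have "X (polyop smul A (pCons a p) v) =
      a *s X v + (A (X (polyop smul A p v)) + c *s X (polyop smul A p v))"
    by (simp add: polyop_pCons linear_add[OF linX] linear_scale[OF linX] comm)
  also have "\<dots> = a *s X v + polyop smul A ([:c, 1:] * pcompose p [:c, 1:]) (X v)"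
    by (simp only: polyop_mult polyop_linear_poly pCons scale_one add.commute)
  also have "\<dots> = polyop smul A (pcompose (pCons a p) [:c, 1:]) (X v)"
    by (simp add: pcompose_pCons polyop_add polyop_pCons linear_0[OF lin] del: mult_pCons_left)
  finally show ?case .
qed

end

end

locale rank_one_twisted_N2_module =
  fixes smul :: "complex \<Rightarrow> 'v::ab_group_add \<Rightarrow> 'v" (infixr "*s" 75)
    and V0 V1 :: "'v set"
    and L I G :: "int \<Rightarrow> 'v \<Rightarrow> 'v"
    and one :: 'v
    and lam alpha :: complex
  assumes module: "twisted_N2_module smul V0 V1 L I G"
    and one_even: "one \<in> V0"
    and free: "bij (\<lambda>(f, g). polyop smul (L 0) f one + G 0 (polyop smul (L 0) g one))"
    and lam_nz: "lam \<noteq> 0"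
    and L_action: "\<forall>m f. L m (polyop smul (L 0) f one) =
        lam powi m *s polyop smul (L 0) ([:of_int m * alpha, 1:] * pcompose f [:of_int m, 1:]) one"
begin

sublocale complex_vector_space smul
  using module by (simp add: twisted_N2_module_def complex_vector_space_def)

lemma linear_L: "Vector_Spaces.linear smul smul (L m)"
  and linear_I: "Vector_Spaces.linear smul smul (I j)"
  and linear_G: "Vector_Spaces.linear smul smul (G k)"
  and subspace_V0: "subspace V0" and subspace_V1: "subspace V1" and V0_Int_V1: "V0 \<inter> V1 = {0}"
  and L_V0: "L m ` V0 \<subseteq> V0" and I_V0: "I j ` V0 \<subseteq> V0" and G_V0: "G k ` V0 \<subseteq> V1"
  using module by (simp_all add: twisted_N2_module_def)

lemma L_I_commutator: "L m (I j v) - I j (L m v) = (- (of_int j + 1/2)) *s I (j + m) v"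
  and L_G_commutator: "L m (G k v) - G k (L m v) = (of_int m / 2 - of_int k / 2) *s G (k + 2 * m) v"
  and I_G_commutator: "I j (G k v) - G k (I j v) = G (2 * j + 1 + k) v"
  using module unfolding twisted_N2_module_def by blast+

lemma G_G_even: "even (k + l) \<Longrightarrow>
    G k (G l v) + G l (G k v) = ((-1) ^ nat \<bar>k\<bar> * 2) *s L ((k + l) div 2) v"
  and G_G_odd: "odd (k + l) \<Longrightarrow> G k (G l v) + G l (G k v) =
    ((-1) ^ nat \<bar>k + 1\<bar> * (of_int k / 2 - of_int l / 2)) *s I ((k + l) div 2) v"
  using module unfolding twisted_N2_module_def by blast+

text \<open>Ev f and Od f are the paper's f(\<partial>^2) 1 and \<partial> f(\<partial>^2) 1.\<close>

definition Ev :: "complex poly \<Rightarrow> 'v" where "Ev f = polyop smul (L 0) f one"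
definition Od :: "complex poly \<Rightarrow> 'v" where "Od f = G 0 (Ev f)"

lemma Ev_add: "Ev (p + q) = Ev p + Ev q" and Ev_smult: "Ev (smult c p) = c *s Ev p"
  and Ev_diff: "Ev (p - q) = Ev p - Ev q" and Ev_minus: "Ev (- p) = - Ev p"
  and polyop_Ev: "polyop smul (L 0) p (Ev q) = Ev (p * q)"
  and Ev_0: "Ev 0 = 0" and Ev_1: "Ev 1 = one"
  by (simp_all add: Ev_def polyop_add polyop_smult polyop_diff polyop_minus polyop_mult linear_L
        polyop_pCons linear_0[OF linear_L] flip: pCons_one)

lemma Od_add: "Od (p + q) = Od p + Od q" and Od_smult: "Od (smult c p) = c *s Od p"
  and Od_diff: "Od (p - q) = Od p - Od q" and Od_0: "Od 0 = 0"
  by (simp_all add: Od_def Ev_add Ev_smult Ev_diff Ev_0 linear_add[OF linear_G]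
      linear_scale[OF linear_G] linear_diff[OF linear_G] linear_0[OF linear_G])

lemma L0_Ev: "L 0 (Ev f) = Ev ([:0, 1:] * f)"
  using polyop_linear_poly[OF linear_L, of 0 0 1 "Ev f"] by (simp add: polyop_Ev)

lemma polyop_Od: "polyop smul (L 0) p (Od q) = Od (p * q)"
proof -
  have "G 0 (L 0 v) = L 0 (G 0 v) + 0 *s G 0 v" for v
    using L_G_commutator[of 0 0 v] by simp
  from linear_polyop_shift[OF linear_L linear_G this]
  have "polyop smul (L 0) p (Od q) = G 0 (polyop smul (L 0) p (Ev q))"
    unfolding Od_def by simp
  then show ?thesis by (simp add: polyop_Ev Od_def)
qed

lemma Ev_add_Od_eq_iff: "Ev f + Od g = Ev f' + Od g' \<longleftrightarrow> f = f' \<and> g = g'"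
  using bij_is_inj[OF free] unfolding inj_def Ev_def Od_def by auto

lemma Ev_eq_iff: "Ev f = Ev f' \<longleftrightarrow> f = f'"
  using Ev_add_Od_eq_iff[of f 0 f' 0] by (simp add: Od_0)

lemma Od_eq_iff: "Od f = Od f' \<longleftrightarrow> f = f'"
  using Ev_add_Od_eq_iff[of 0 f 0 f'] by (simp add: Ev_0)

lemma Ev_in_V0: "Ev f \<in> V0"
proof (induct f)
  case 0 then show ?case by (simp add: Ev_0 subspace_0[OF subspace_V0])
next
  case (pCons a p)
  have "Ev (pCons a p) = a *s one + L 0 (Ev p)"
    by (simp add: Ev_def polyop_pCons linear_L)
  moreover have "L 0 (Ev p) \<in> V0" using L_V0 pCons(2) by blast
  ultimately show ?case
    using subspace_add[OF subspace_V0] subspace_scale[OF subspace_V0] one_even by simp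
qed

lemma Od_in_V1: "Od f \<in> V1"
  using G_V0 Ev_in_V0 unfolding Od_def by blast

lemma V0_imp_Ev: assumes "v \<in> V0" obtains f where "v = Ev f"
proof -
  obtain f g where v: "v = Ev f + Od g"
    using bij_is_surj[OF free] unfolding Ev_def Od_def surj_def by fastforce
  have "Od g = v - Ev f" using v by simp
  also have "\<dots> \<in> V0" using subspace_diff[OF subspace_V0 assms Ev_in_V0] .
  finally have "Od g = 0" using Od_in_V1[of g] V0_Int_V1 by blast
  then show ?thesis using that v by simp
qed

lemma V1_imp_Od: assumes "v \<in> V1" obtains g where "v = Od g"
proof -
  obtain f g where v: "v = Ev f + Od g"
    using bij_is_surj[OF free] unfolding Ev_def Od_def surj_def by fastforce
  have "Ev f = v - Od g" using v by simp
  also have "\<dots> \<in> V1" using subspace_diff[OF subspace_V1 assms Od_in_V1] .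
  finally have "Ev f = 0" using Ev_in_V0[of f] V0_Int_V1 by blast
  then show ?thesis using that v by simp
qed

lemma G_L0_commute: "G k (L 0 v) = L 0 (G k v) + (of_int k / 2) *s G k v"
proof -
  have "L 0 (G k v) - G k (L 0 v) = (- (of_int k / 2)) *s G k v"
    using L_G_commutator[of 0 k v] by simp
  then show ?thesis
    by (metis add_diff_cancel_left' diff_add_cancel scale_minus_left diff_minus_eq_add add.commute)
qed

lemma I_L0_commute: "I j (L 0 v) = L 0 (I j v) + (of_int j + 1/2) *s I j v"
proof -
  have "L 0 (I j v) - I j (L 0 v) = (- (of_int j + 1/2)) *s I j v"
    using L_I_commutator[of 0 j v] by simp
  then show ?thesis
    by (metis add_diff_cancel_left' diff_add_cancel scale_minus_left diff_minus_eq_add add.commute)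
qed

lemma G_square: "G k (G k v) = (-1) ^ nat \<bar>k\<bar> *s L k v"
proof -
  have "G k (G k v) + G k (G k v) = 2 *s ((-1) ^ nat \<bar>k\<bar> *s L k v)"
    using G_G_even[of k k v] by (simp add: mult.commute)
  then show ?thesis by (simp only: add_self_eq_scale_two_iff)
qed

definition G_poly :: "int \<Rightarrow> complex poly" where "G_poly k = (SOME g. G k one = Od g)"
definition I_poly :: "int \<Rightarrow> complex poly" where "I_poly j = (SOME h. I j one = Ev h)"

lemma G_one_eq: "G k one = Od (G_poly k)"
proof -
  obtain g where "G k one = Od g" using V1_imp_Od G_V0 one_even by blast
  then show ?thesis unfolding G_poly_def by (rule someI)
qed

lemma I_one_eq: "I j one = Ev (I_poly j)"
proof -
  obtain h where "I j one = Ev h" using V0_imp_Ev I_V0 one_even by blast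
  then show ?thesis unfolding I_poly_def by (rule someI)
qed

lemma G_Ev: "G k (Ev f) = Od (pcompose f [:of_int k / 2, 1:] * G_poly k)"
  using linear_polyop_shift[OF linear_L linear_G G_L0_commute, where p = f and v = one]
  by (simp add: Ev_def[symmetric] G_one_eq polyop_Od)

lemma I_Ev: "I j (Ev f) = Ev (pcompose f [:of_int j + 1/2, 1:] * I_poly j)"
  using linear_polyop_shift[OF linear_L linear_I I_L0_commute, where p = f and v = one]
  by (simp add: Ev_def[symmetric] I_one_eq polyop_Ev)

lemma L_Ev: "L m (Ev f) = lam powi m *s Ev ([:of_int m * alpha, 1:] * pcompose f [:of_int m, 1:])"
  using L_action unfolding Ev_def by blast

lemma L_one: "L m one = lam powi m *s Ev [:of_int m * alpha, 1:]"
  using L_Ev[of m 1] by (simp add: Ev_1 pcompose_1)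

lemma G0_Od: "G 0 (Od f) = Ev ([:0, 1:] * f)"
  using G_square[of 0 "Ev f"] by (simp add: Od_def L0_Ev)

lemma G_even_Od: "G (2 * n) (Od f) = 2 *s L n (Ev f) - G 0 (G (2 * n) (Ev f))"
proof -
  have "G (2 * n) (G 0 (Ev f)) + G 0 (G (2 * n) (Ev f)) = 2 *s L n (Ev f)"
    using G_G_even[of "2 * n" 0 "Ev f"] by (simp add: neg_one_power_nat_abs)
  then show ?thesis unfolding Od_def eq_diff_eq .
qed

lemma G_odd_Od:
  "G (2 * j + 1) (Od f) = (of_int (2 * j + 1) / 2) *s I j (Ev f) - G 0 (G (2 * j + 1) (Ev f))"
proof -
  have "odd (2 * j + 1 + 0)" and "(2 * j + 1 + 0) div 2 = j" and "even (2 * j + 1 + 1)"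
    by presburger+
  then have "G (2 * j + 1) (G 0 (Ev f)) + G 0 (G (2 * j + 1) (Ev f)) =
      (of_int (2 * j + 1) / 2) *s I j (Ev f)"
    using G_G_odd[of "2 * j + 1" 0 "Ev f"] by (simp add: neg_one_power_nat_abs)
  then show ?thesis unfolding Od_def eq_diff_eq .
qed

lemma I_Od: "I j (Od f) = G 0 (I j (Ev f)) + G (2 * j + 1) (Ev f)"
  using I_G_commutator[of j 0 "Ev f"] unfolding Od_def by (metis add.commute diff_eq_eq add_0_right)

lemma L_Od: "L m (Od f) = G 0 (L m (Ev f)) + (of_int m / 2) *s G (2 * m) (Ev f)"
  using L_G_commutator[of m 0 "Ev f"] unfolding Od_def by (simp add: diff_eq_eq add.commute)

lemma G_poly_even: "G_poly (2 * n) = [:lam powi n:]"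
proof -
  define g where "g = G_poly (2 * n)"
  define s where "s = pcompose g [:of_int n, 1:]"
  define c where "c = lam powi n"
  have half: "of_int (2 * n) / 2 = (of_int n :: complex)" by simp
  have factor: "smult (2 * c) ([:of_int n * alpha, 1:] * s) - [:0, 1:] * (s * g) =
      s * (smult (2 * c) [:of_int n * alpha, 1:] - [:0, 1:] * g)"
    by (simp only: right_diff_distrib mult_smult_right mult.commute mult.left_commute mult.assoc)
  have "G (2 * n) (G (2 * n) one) = 2 *s (c *s Ev ([:of_int n * alpha, 1:] * s)) - Ev ([:0, 1:] * (s * g))"
    by (simp only: G_one_eq g_def[symmetric] G_even_Od G_Ev G0_Od L_Ev half s_def c_def)
  also have "\<dots> = Ev (s * (smult (2 * c) [:of_int n * alpha, 1:] - [:0, 1:] * g))"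
    by (simp only: factor[symmetric] Ev_diff Ev_smult scale_scale)
  finally have lhs: "G (2 * n) (G (2 * n) one) = \<dots>" .
  have "L (2 * n) one = Ev (smult (c ^ 2) [:of_int (2 * n) * alpha, 1:])"
  proof -
    have "c ^ 2 = lam powi (2 * n)" by (simp add: c_def power_int_power' mult.commute)
    then show ?thesis using L_one[of "2 * n"] by (simp only: Ev_smult)
  qed
  with lhs G_square[of "2 * n" one]
  have "pcompose g [:of_int n, 1:] * (smult (2 * c) [:of_int n * alpha, 1:] - [:0, 1:] * g) =
      smult (c ^ 2) [:of_int (2 * n) * alpha, 1:]"
    by (simp add: neg_one_power_nat_abs Ev_eq_iff s_def)
  from const_of_even_square_identity[OF _ this] show ?thesis
    using lam_nz unfolding g_def c_def by simp
qed

lemma G_poly_odd_shift: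
  "G_poly (2 * j + 1 + 2 * n) =
    smult (lam powi n) (I_poly j + G_poly (2 * j + 1) - pcompose (I_poly j) [:of_int n, 1:])"
proof -
  define c where "c = lam powi n"
  have half: "of_int (2 * n) / 2 = (of_int n :: complex)" by simp
  have "I j (G (2 * n) one) = Od ([:c:] * I_poly j) + Od ([:c:] * G_poly (2 * j + 1))"
    by (simp only: G_one_eq[of "2 * n"] G_poly_even c_def[symmetric] I_Od I_Ev G_Ev[of "2 * j + 1"]
        pcompose_const Od_def[symmetric])
  moreover have "G (2 * n) (I j one) = Od (pcompose (I_poly j) [:of_int n, 1:] * [:c:])"
    by (simp only: I_one_eq G_Ev half G_poly_even c_def[symmetric])
  ultimately have "Od (G_poly (2 * j + 1 + 2 * n)) =
      Od ([:c:] * I_poly j + [:c:] * G_poly (2 * j + 1) - pcompose (I_poly j) [:of_int n, 1:] * [:c:])"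
    using I_G_commutator[of j "2 * n" one] by (simp add: G_one_eq Od_add Od_diff)
  then show ?thesis
    unfolding Od_eq_iff c_def by (simp add: smult_add_right smult_diff_right mult.commute)
qed

lemma G_odd_square_poly:
  fixes j :: int
  defines "g \<equiv> G_poly (2 * j + 1)" and "h \<equiv> I_poly j" and "c \<equiv> of_int (2 * j + 1) / 2"
  shows "pcompose g [:c, 1:] * (smult c h - [:0, 1:] * g) = - smult (lam powi (2 * j + 1)) [:2 * c * alpha, 1:]"
proof -
  have shift: "of_int j + 1/2 = c" by (simp add: c_def field_simps)
  have factor: "- ([:0, 1:] * (pcompose g [:c, 1:] * g)) + smult c (pcompose g [:c, 1:] * h) =
      pcompose g [:c, 1:] * (smult c h - [:0, 1:] * g)"
    by (simp only: right_diff_distrib mult_smult_right mult.commute mult.left_commute) simp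
  have "G (2 * j + 1) (G (2 * j + 1) one) =
      c *s Ev (pcompose g [:c, 1:] * h) - Ev ([:0, 1:] * (pcompose g [:c, 1:] * g))"
    by (simp only: G_one_eq[of "2 * j + 1"] g_def[symmetric] h_def[symmetric] G_odd_Od
        G_Ev[of "2 * j + 1"] G0_Od I_Ev shift c_def[symmetric])
  also have "\<dots> = Ev (pcompose g [:c, 1:] * (smult c h - [:0, 1:] * g))"
    by (simp only: factor[symmetric] Ev_add Ev_minus Ev_smult) simp
  finally have "G (2 * j + 1) (G (2 * j + 1) one) = \<dots>" .
  moreover have "- L (2 * j + 1) one = Ev (- smult (lam powi (2 * j + 1)) [:2 * c * alpha, 1:])"
  proof -
    have "2 * c * alpha = of_int (2 * j + 1) * alpha" by (simp add: c_def)
    then show ?thesis by (simp only: L_one Ev_minus Ev_smult)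
  qed
  moreover have "even (nat \<bar>2 * j + 1\<bar>) \<longleftrightarrow> False" by (simp add: even_nat_iff)
  ultimately show ?thesis
    using G_square[of "2 * j + 1" one] by (simp add: Ev_eq_iff)
qed

lemma L2_G_odd_poly:
  fixes j :: int
  defines "g \<equiv> G_poly (2 * j + 1)" and "h \<equiv> I_poly j" and "c \<equiv> of_int (2 * j + 1) / 2"
  shows "[:2 * alpha, 1:] * pcompose g [:2, 1:] + pcompose g [:2, 1:] - pcompose [:2 * alpha, 1:] [:c, 1:] * g
    = smult (1 - c) (h + g - pcompose h [:2, 1:])"
    (is "?lhs = ?rhs")
proof -
  define La2 where "La2 = lam powi 2"
  have nums: "(2 :: complex) / 2 = 1" "(of_int 2 :: complex) / 2 = 1" "(of_int (2 * 2) :: complex) / 2 = 2"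
    "(of_int 2 :: complex) = 2"
    by simp_all
  have "L 2 (G (2 * j + 1) one) - G (2 * j + 1) (L 2 one) =
      La2 *s Od ([:2 * alpha, 1:] * pcompose g [:2, 1:]) + 1 *s Od (pcompose g [:2, 1:] * [:La2:])
      - La2 *s Od (pcompose [:2 * alpha, 1:] [:c, 1:] * g)"
    by (simp only: G_one_eq[of "2 * j + 1"] g_def[symmetric] L_Od L_Ev G_Ev[of "2 * 2"]
        G_Ev[of "2 * j + 1"] G_poly_even[of 2] L_one linear_scale[OF linear_G] nums
        La2_def[symmetric] Od_def[symmetric] c_def[symmetric] mult.commute[of 2 alpha])
  also have "\<dots> = Od (smult La2 ?lhs)"
    by (simp only: Od_add[symmetric] Od_diff[symmetric] Od_smult[symmetric] Od_eq_iff)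
      (simp add: algebra_simps smult_add_right smult_diff_right)
  finally have "Od (smult La2 ?lhs) = (1 - c) *s Od (G_poly (2 * j + 1 + 2 * 2))"
    using L_G_commutator[of 2 "2 * j + 1" one] G_one_eq[of "2 * j + 1 + 2 * 2"] nums c_def by simp
  also have "\<dots> = Od (smult La2 ?rhs)"
    using G_poly_odd_shift[of j 2] by (simp add: Od_smult g_def h_def La2_def mult.commute)
  finally have "smult La2 ?lhs = smult La2 ?rhs"
    by (simp only: Od_eq_iff)
  then show ?thesis
    by (rule smult_cancel[rotated]) (simp add: La2_def lam_nz)
qed

lemma G_poly_odd_const:
  obtains e where "G_poly (2 * j + 1) = [:e:]" and "e ^ 2 = lam powi (2 * j + 1)"
    and "I_poly j = [:- 2 * alpha * e:]"
proof -
  define c :: complex where "c = of_int (2 * j + 1) / 2"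
  have odd_ne: "(of_int (2 * j + 1) :: complex) \<noteq> of_int (2 * i)" for i
    by (simp only: of_int_eq_iff) presburger
  have "c \<noteq> 0" "c \<noteq> 1" "c \<noteq> 2"
    using odd_ne[of 0] odd_ne[of 1] odd_ne[of 2] by (auto simp: c_def)
  moreover have "lam powi (2 * j + 1) \<noteq> 0" using lam_nz by simp
  ultimately show ?thesis
    using const_of_odd_identities G_odd_square_poly[of j, folded c_def] L2_G_odd_poly[of j, folded c_def] that
    by blast
qed

lemma G_poly_odd: "G_poly (2 * j + 1) = smult (lam powi j) (G_poly 1)"
proof -
  obtain a where "I_poly 0 = [:a:]" using G_poly_odd_const[of 0] by metis
  then show ?thesis using G_poly_odd_shift[of 0 j] by (simp add: add.commute)
qed

lemma Ev_linear_poly: "Ev [:a, b:] = a *s one + b *s L 0 one"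
  unfolding Ev_def by (rule polyop_linear_poly[OF linear_L])

lemma G0_one: "G 0 one = Od 1"
  by (simp add: Od_def Ev_1)

lemma Od_const: "Od [:a:] = a *s G 0 one"
  using Od_smult[of a 1] by (simp add: Od_def Ev_1)

lemma action_on_one:
  obtains e where "e ^ 2 = lam"
    and "\<And>k. G k one = (lam powi (k div 2) * (if even k then 1 else e)) *s G 0 one"
    and "\<And>j. G (2 * j + 1) (G 0 one) =
      - ((lam powi j * e) *s (L 0 one + (of_int (2 * j + 1) * alpha) *s one))"
    and "\<And>j. I j one = (- 2 * alpha * (lam powi j * e)) *s one"
proof -
  obtain e where G1: "G_poly 1 = [:e:]" and "e ^ 2 = lam"
    using G_poly_odd_const[of 0] by auto
  have G_odd: "G_poly (2 * j + 1) = [:lam powi j * e:]" for j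
    by (simp add: G_poly_odd G1)
  have I_poly: "I_poly j = [:- 2 * alpha * (lam powi j * e):]" for j
    using G_poly_odd_const[of j] G_odd[of j] by auto
  have "G k one = (lam powi (k div 2) * (if even k then 1 else e)) *s G 0 one" for k
  proof (cases "even k")
    case True
    then show ?thesis using G_one_eq[of k] G_poly_even[of "k div 2"] by (simp add: Od_const)
  next
    case False
    then have "k = 2 * (k div 2) + 1" by presburger
    then show ?thesis using G_one_eq[of k] G_odd[of "k div 2"] False by (metis Od_const mult.commute)
  qed
  moreover have "G (2 * j + 1) (G 0 one) =
      - ((lam powi j * e) *s (L 0 one + (of_int (2 * j + 1) * alpha) *s one))" for j
  proof -
    have coeffs: "smult (of_int (2 * j + 1) / 2) (I_poly j) - [:0, 1:] * G_poly (2 * j + 1) =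
        [:- (lam powi j * e) * (of_int (2 * j + 1) * alpha), - (lam powi j * e):]"
      unfolding I_poly G_odd by (simp add: field_simps)
    have "G (2 * j + 1) (G 0 one) =
        Ev (smult (of_int (2 * j + 1) / 2) (I_poly j) - [:0, 1:] * G_poly (2 * j + 1))"
      by (simp only: G0_one G_odd_Od Ev_1 I_one_eq G_one_eq[of "2 * j + 1"] G0_Od Ev_smult Ev_diff)
    then show ?thesis by (simp only: coeffs Ev_linear_poly) (simp add: scale_right_distrib)
  qed
  moreover have "I j one = (- 2 * alpha * (lam powi j * e)) *s one" for j
    using Ev_linear_poly[of _ 0] by (simp add: I_one_eq I_poly)
  ultimately show ?thesis using that \<open>e ^ 2 = lam\<close> by blast
qed

lemma action_on_one_signed:
  assumes mu_sqrt: "mu ^ 2 = lam"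
  obtains s :: complex where "s = 1 \<or> s = - 1"
    and "\<forall>j k. G k one = (s ^ nat \<bar>k\<bar> * mu powi k) *s G 0 one \<and>
      G (2 * j + 1) (G 0 one) =
        - ((s * mu powi (2 * j + 1)) *s (L 0 one + (of_int (2 * j + 1) * alpha) *s one)) \<and>
      I j one = (- 2 * s * mu powi (2 * j + 1) * alpha) *s one"
proof -
  obtain e where "e ^ 2 = lam"
    and G_one: "\<And>k. G k one = (lam powi (k div 2) * (if even k then 1 else e)) *s G 0 one"
    and G_odd_G0: "\<And>j. G (2 * j + 1) (G 0 one) =
      - ((lam powi j * e) *s (L 0 one + (of_int (2 * j + 1) * alpha) *s one))"
    and I_one: "\<And>j. I j one = (- 2 * alpha * (lam powi j * e)) *s one"
    using action_on_one by blast
  have "mu \<noteq> 0" using mu_sqrt lam_nz by auto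
  then have mu_powi: "mu powi k = lam powi (k div 2) * (if even k then 1 else mu)" for k
    using power_int_eq_square_power_int_div_2[of mu k] unfolding mu_sqrt by blast
  have mu_powi_odd: "mu powi (2 * j + 1) = lam powi j * mu" for j
    using mu_powi[of "2 * j + 1"] by simp
  define s where "s = e / mu"
  have e: "e = s * mu" using \<open>mu \<noteq> 0\<close> by (simp add: s_def)
  have "e = mu \<or> e = - mu"
    using power2_eq_iff[of e mu] \<open>e ^ 2 = lam\<close> mu_sqrt by simp
  then have s: "s = 1 \<or> s = - 1" using \<open>mu \<noteq> 0\<close> by (auto simp: s_def)
  then have s_power: "s ^ nat \<bar>k\<bar> = (if even k then 1 else s)" for k
    by (auto simp: neg_one_power_nat_abs)
  show ?thesis
  proof (rule that[OF s], intro allI conjI)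
    fix j k :: int
    show "G k one = (s ^ nat \<bar>k\<bar> * mu powi k) *s G 0 one"
      using G_one[of k] by (simp add: e s_power mu_powi[of k] mult_ac)
    show "G (2 * j + 1) (G 0 one) =
        - ((s * mu powi (2 * j + 1)) *s (L 0 one + (of_int (2 * j + 1) * alpha) *s one))"
      unfolding mu_powi_odd using G_odd_G0[of j] by (simp add: e mult_ac)
    show "I j one = (- 2 * s * mu powi (2 * j + 1) * alpha) *s one"
      unfolding mu_powi_odd using I_one[of j] by (simp add: e mult_ac)
  qed
qed

end

theorem lemma3p2:
  fixes smul :: "complex \<Rightarrow> 'v::ab_group_add \<Rightarrow> 'v"
    and V0 V1 :: "'v set"
    and L I G :: "int \<Rightarrow> 'v \<Rightarrow> 'v"
    and one :: 'v
    and lam mu alpha :: complex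
  assumes module: "twisted_N2_module smul V0 V1 L I G"
    and one_even: "one \<in> V0"
    and free: "bij (\<lambda>(f, g). polyop smul (L 0) f one + G 0 (polyop smul (L 0) g one))"
    and lam_nz: "lam \<noteq> 0"
    and mu_sqrt: "mu ^ 2 = lam"
    and L_action: "\<forall>m f. L m (polyop smul (L 0) f one) =
        smul (lam powi m)
          (polyop smul (L 0) ([:of_int m * alpha, 1:] * pcompose f [:of_int m, 1:]) one)"
  shows "(\<forall>j k. G k one = smul (mu powi k) (G 0 one) \<and>
            G (2 * j + 1) (G 0 one) =
              - smul (mu powi (2 * j + 1)) (L 0 one + smul (of_int (2 * j + 1) * alpha) one) \<and>
            I j one = smul (- 2 * mu powi (2 * j + 1) * alpha) one)
       \<or> (\<forall>j k. G k one = smul ((-1) ^ nat \<bar>k\<bar> * mu powi k) (G 0 one) \<and>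
            G (2 * j + 1) (G 0 one) =
              smul (mu powi (2 * j + 1)) (L 0 one + smul (of_int (2 * j + 1) * alpha) one) \<and>
            I j one = smul (2 * mu powi (2 * j + 1) * alpha) one)"
proof -
  interpret rank_one_twisted_N2_module smul V0 V1 L I G one lam alpha
    using module one_even free lam_nz L_action by unfold_locales
  obtain s where "s = 1 \<or> s = - 1"
    and action: "\<forall>j k. G k one = smul (s ^ nat \<bar>k\<bar> * mu powi k) (G 0 one) \<and>
      G (2 * j + 1) (G 0 one) =
        - smul (s * mu powi (2 * j + 1)) (L 0 one + smul (of_int (2 * j + 1) * alpha) one) \<and>
      I j one = smul (- 2 * s * mu powi (2 * j + 1) * alpha) one"
    by (rule action_on_one_signed[OF mu_sqrt])
  then show ?thesis
  proof (elim disjE)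
    assume "s = 1"
    from action[unfolded this power_one mult_1 mult_1_right] show ?thesis by (rule disjI1)
  next
    assume "s = - 1"
    from action[unfolded this mult_minus1 mult_minus1_right scale_minus_left minus_minus]
    show ?thesis by (rule disjI2)
  qed
qed

end
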